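(* Let $\mathfrak{S}=(S,\to,;)$ be an implication semigroup containing an element $0$ such that for all $a\in S$ we have $0\le a$ and $0;a=a;0=0$. If $\mathfrak{S}$ is representable via some representation $h$, then there exists a representation $h'$ of $\mathfrak{S}$ with $h'(0)=\emptyset$. Moreover, if $h$ is defined over a finite base, so is $h'$.
   Context: An implication algebra is a pair $(A,\to)$ with $\to$ a binary operation satisfying, for all $a,b,c$: $(a\to b)\to a=a$; $(a\to b)\to b=(b\to a)\to a$; $a\to(b\to c)=b\to(a\to c)$. In it, $1:=a\to a$ does not depend on $a$, and $a\le b$ iff $a\to b=1$ is a partial order. An implication semigroup is $(S,\to,;)$ with $(S,\to)$ an implication algebra, $(S,;)$ a semigroup, and for all $a,b,c$: $((a\to b)\to b);c=(a;c\to b;c)\to b;c$ and $c;((a\to b)\to b)=(c;a\to c;b)\to c;b$. For a transitive relation $\top\subseteq X\times X$, $\mathfrak{S}(\top)=(\wp(\top),\to,;)$ with $a\to b=(\top\setminus a)\cup b$ and $;$ relational composition. A representation of $\mathfrak{S}$ is an embedding (injective map preserving $\to$ and $;$) $h:\mathfrak{S}\to\mathfrak{S}(\top)$ for some transitive $\top\subseteq X\times X$; $X$ is its base. *)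

theory Defs
  imports Main
begin

definition implication_algebra :: "('a \<Rightarrow> 'a \<Rightarrow> 'a) \<Rightarrow> bool" where
  "implication_algebra imp \<longleftrightarrow>
     (\<forall>a b. imp (imp a b) a = a) \<and>
     (\<forall>a b. imp (imp a b) b = imp (imp b a) a) \<and>
     (\<forall>a b c. imp a (imp b c) = imp b (imp a c))"

definition ia_le :: "('a \<Rightarrow> 'a \<Rightarrow> 'a) \<Rightarrow> 'a \<Rightarrow> 'a \<Rightarrow> bool" where
  "ia_le imp a b \<longleftrightarrow> imp a b = imp a a"

definition implication_semigroup :: "('a \<Rightarrow> 'a \<Rightarrow> 'a) \<Rightarrow> ('a \<Rightarrow> 'a \<Rightarrow> 'a) \<Rightarrow> bool" where
  "implication_semigroup imp sc \<longleftrightarrow>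
     implication_algebra imp \<and>
     (\<forall>a b c. sc (sc a b) c = sc a (sc b c)) \<and>
     (\<forall>a b c. sc (imp (imp a b) b) c = imp (imp (sc a c) (sc b c)) (sc b c)) \<and>
     (\<forall>a b c. sc c (imp (imp a b) b) = imp (imp (sc c a) (sc c b)) (sc c b))"

text \<open>h is a representation of (UNIV, imp, sc) into the implication semigroup
  of all subsets of the transitive relation T on base X.\<close>
definition is_representation ::
  "('a \<Rightarrow> 'a \<Rightarrow> 'a) \<Rightarrow> ('a \<Rightarrow> 'a \<Rightarrow> 'a) \<Rightarrow> ('a \<Rightarrow> ('b \<times> 'b) set) \<Rightarrow> ('b \<times> 'b) set \<Rightarrow> 'b set \<Rightarrow> bool" where
  "is_representation imp sc h T X \<longleftrightarrow>
     T \<subseteq> X \<times> X \<and> trans T \<and> inj h \<and>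
     (\<forall>a. h a \<subseteq> T) \<and>
     (\<forall>a b. h (imp a b) = (T - h a) \<union> h b) \<and>
     (\<forall>a b. h (sc a b) = h a O h b)"

end

theory Submission
  imports Defs
begin

text \<open>Let \<open>Z = h 0\<close> and \<open>T = h 1\<close>. Since \<open>0\<close> is least and absorbing, \<open>Z\<close> lies in every \<open>h a\<close>
  and satisfies \<open>h a O Z \<subseteq> Z\<close> and \<open>Z O T \<subseteq> Z\<close>. For every base point \<open>w\<close>, the points \<open>y\<close>
  with \<open>(y, w) \<in> T\<^sup>= - Z\<close> form a cone that is convex for composition, so restricting every
  \<open>h a\<close> to that cone preserves \<open>\<rightarrow>\<close> and \<open>;\<close>. The disjoint union of these restrictions over all
  \<open>w\<close>, with base \<open>X \<times> X\<close>, is still faithful, because every pair \<open>(x, y) \<notin> Z\<close> of some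
  \<open>h a\<close> lies in the cone of \<open>y\<close>; and it kills \<open>Z\<close>, because a \<open>Z\<close>-edge inside the cone of
  \<open>w\<close> would, followed by \<open>T\<^sup>=\<close>, give a \<open>Z\<close>-edge into \<open>w\<close>.\<close>

definition fibrewise_restrict ::
  "('b \<Rightarrow> 'b set) \<Rightarrow> ('b \<times> 'b) set \<Rightarrow> (('b \<times> 'b) \<times> ('b \<times> 'b)) set" where
  "fibrewise_restrict S A = {((x, w), (y, w)) | x y w. (x, y) \<in> A \<and> x \<in> S w \<and> y \<in> S w}"

lemma mem_fibrewise_restrict [simp]:
  "((x, v), (y, w)) \<in> fibrewise_restrict S A \<longleftrightarrow> v = w \<and> (x, y) \<in> A \<and> x \<in> S w \<and> y \<in> S w"
  unfolding fibrewise_restrict_def by auto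

lemma fibrewise_restrict_Un:
  "fibrewise_restrict S (A \<union> B) = fibrewise_restrict S A \<union> fibrewise_restrict S B"
  by auto

lemma fibrewise_restrict_Diff:
  "fibrewise_restrict S (A - B) = fibrewise_restrict S A - fibrewise_restrict S B"
  by auto

lemma fibrewise_restrict_mono: "A \<subseteq> B \<Longrightarrow> fibrewise_restrict S A \<subseteq> fibrewise_restrict S B"
  by auto

lemma trans_fibrewise_restrict: "trans A \<Longrightarrow> trans (fibrewise_restrict S A)"
  unfolding trans_def by auto

lemma fibrewise_restrict_relcomp:
  assumes "\<And>w x y u. (x, y) \<in> A \<Longrightarrow> (y, u) \<in> B \<Longrightarrow> x \<in> S w \<Longrightarrow> u \<in> S w \<Longrightarrow> y \<in> S w"
  shows "fibrewise_restrict S (A O B) = fibrewise_restrict S A O fibrewise_restrict S B"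
proof (intro equalityI subsetI)
  fix p assume "p \<in> fibrewise_restrict S (A O B)"
  then obtain x u w y where p: "p = ((x, w), (u, w))" and x: "x \<in> S w" and u: "u \<in> S w"
    and xy: "(x, y) \<in> A" and yu: "(y, u) \<in> B"
    unfolding fibrewise_restrict_def by blast
  have "y \<in> S w"
    using assms[OF xy yu x u] .
  then have "((x, w), (y, w)) \<in> fibrewise_restrict S A" and "((y, w), (u, w)) \<in> fibrewise_restrict S B"
    using x u xy yu by simp_all
  then show "p \<in> fibrewise_restrict S A O fibrewise_restrict S B"
    unfolding p by (rule relcompI)
qed auto

lemma fibrewise_restrict_subset_Times:
  assumes "A \<subseteq> X \<times> X" and "\<And>w x y. (x, y) \<in> A \<Longrightarrow> x \<in> S w \<Longrightarrow> w \<in> X"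
  shows "fibrewise_restrict S A \<subseteq> (X \<times> X) \<times> (X \<times> X)"
  using assms by fastforce

lemma representation_unit:
  assumes "is_representation imp sc h T X"
  shows "h (imp a a) = T"
  using assms unfolding is_representation_def by auto

lemma representation_mono:
  assumes "is_representation imp sc h T X" and "ia_le imp a b"
  shows "h a \<subseteq> h b"
proof -
  have "(T - h a) \<union> h b = T"
    using assms representation_unit[OF assms(1)] unfolding is_representation_def ia_le_def
    by metis
  then show ?thesis
    using assms(1) unfolding is_representation_def by blast
qed

definition cone :: "('b \<times> 'b) set \<Rightarrow> ('b \<times> 'b) set \<Rightarrow> 'b \<Rightarrow> 'b set" where
  "cone T Z w = {y. (y, w) \<in> T\<^sup>= - Z}"

locale bottom_representation =
  fixes imp sc :: "'a \<Rightarrow> 'a \<Rightarrow> 'a" and z :: 'a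
    and h :: "'a \<Rightarrow> ('b \<times> 'b) set" and T :: "('b \<times> 'b) set" and X :: "'b set"
  assumes representation: "is_representation imp sc h T X"
    and bottom: "ia_le imp z a"
    and zero_left: "sc z a = z" and zero_right: "sc a z = z"
begin

abbreviation C :: "'b \<Rightarrow> 'b set" where
  "C \<equiv> cone T (h z)"

lemma base: "T \<subseteq> X \<times> X" and trans_T: "trans T" and inj_h: "inj h" and h_subset: "h a \<subseteq> T"
  and h_imp: "h (imp a b) = (T - h a) \<union> h b" and h_sc: "h (sc a b) = h a O h b"
  using representation unfolding is_representation_def by auto

lemma zero_least: "h z \<subseteq> h a"
  using representation_mono[OF representation bottom] .

lemma zero_relcomp_top: "h z O T \<subseteq> h z"
  using h_sc[of z "imp z z"] zero_left representation_unit[OF representation] by simp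

lemma relcomp_zero: "h a O h z \<subseteq> h z"
  using h_sc[of a z] zero_right by simp

lemma cone_convex:
  assumes "(x, y) \<in> h a" and "(y, u) \<in> h b" and "x \<in> C w" and "u \<in> C w"
  shows "y \<in> C w"
proof -
  have "(y, u) \<in> T" and "(u, w) \<in> T\<^sup>="
    using assms(2,4) h_subset unfolding cone_def by auto
  then have "(y, w) \<in> T\<^sup>="
    using trans_T by (auto dest: transD)
  moreover have "(y, w) \<notin> h z"
    using assms(1,3) relcomp_zero unfolding cone_def by blast
  ultimately show ?thesis
    unfolding cone_def by simp
qed

lemma mem_own_cone:
  assumes "(x, y) \<in> h a" and "(x, y) \<notin> h z"
  shows "x \<in> C y" and "y \<in> C y"
  using assms h_subset relcomp_zero unfolding cone_def by blast+

lemma zero_leaves_cone: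
  assumes "(x, y) \<in> h z" and "x \<in> C w"
  shows "y \<notin> C w"
  using assms zero_relcomp_top unfolding cone_def by blast

lemma fibrewise_subset_imp_subset:
  assumes "fibrewise_restrict C (h a) \<subseteq> fibrewise_restrict C (h b)"
  shows "h a \<subseteq> h b"
proof
  fix p assume p: "p \<in> h a"
  show "p \<in> h b"
  proof (rule ccontr)
    obtain x y where xy: "p = (x, y)" by fastforce
    assume "p \<notin> h b"
    then have "(x, y) \<notin> h z"
      using zero_least xy by blast
    then have "((x, y), (y, y)) \<in> fibrewise_restrict C (h a)"
      using mem_own_cone p xy by simp
    then have "((x, y), (y, y)) \<in> fibrewise_restrict C (h b)"
      using assms by blast
    then show False
      using \<open>p \<notin> h b\<close> xy by simp
  qed
qed

lemma representation_fibrewise: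
  "is_representation imp sc (\<lambda>a. fibrewise_restrict C (h a)) (fibrewise_restrict C T) (X \<times> X)"
  unfolding is_representation_def
proof (intro conjI allI)
  show "fibrewise_restrict C T \<subseteq> (X \<times> X) \<times> (X \<times> X)"
    using base by (rule fibrewise_restrict_subset_Times) (auto simp: cone_def dest!: subsetD[OF base])
  show "inj (\<lambda>a. fibrewise_restrict C (h a))"
  proof (rule injI)
    fix a b assume "fibrewise_restrict C (h a) = fibrewise_restrict C (h b)"
    then have "h a = h b"
      using fibrewise_subset_imp_subset by blast
    then show "a = b"
      using inj_h by (simp add: inj_eq)
  qed
  show "trans (fibrewise_restrict C T)"
    using trans_T by (rule trans_fibrewise_restrict)
  fix a b
  show "fibrewise_restrict C (h a) \<subseteq> fibrewise_restrict C T"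
    using h_subset by (rule fibrewise_restrict_mono)
  show "fibrewise_restrict C (h (imp a b))
      = (fibrewise_restrict C T - fibrewise_restrict C (h a)) \<union> fibrewise_restrict C (h b)"
    by (simp only: h_imp fibrewise_restrict_Un fibrewise_restrict_Diff)
  show "fibrewise_restrict C (h (sc a b)) = fibrewise_restrict C (h a) O fibrewise_restrict C (h b)"
    unfolding h_sc using cone_convex by (rule fibrewise_restrict_relcomp)
qed

lemma fibrewise_zero: "fibrewise_restrict C (h z) = {}"
  using zero_leaves_cone by (auto simp: fibrewise_restrict_def)

end

theorem lemma5:
  fixes imp sc :: "'a \<Rightarrow> 'a \<Rightarrow> 'a" and z :: 'a
    and h :: "'a \<Rightarrow> ('b \<times> 'b) set" and T :: "('b \<times> 'b) set" and X :: "'b set"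
  assumes "implication_semigroup imp sc"
    and "\<forall>a. ia_le imp z a"
    and "\<forall>a. sc z a = z \<and> sc a z = z"
    and "is_representation imp sc h T X"
  shows "\<exists>(h' :: 'a \<Rightarrow> (('b \<times> 'b) \<times> ('b \<times> 'b)) set) Tp X'.
           is_representation imp sc h' Tp X' \<and> h' z = {} \<and> (finite X \<longrightarrow> finite X')"
proof -
  interpret bottom_representation imp sc z h T X
    using assms(2-4) by unfold_locales auto
  show ?thesis
    using representation_fibrewise fibrewise_zero finite_cartesian_product by blast
qed

end
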